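(* Let $(B_q)_{q\in\mathbb{N}}$ be a sequence of balls in $\mathbb{R}^m/\mathbb{Z}^m$ with $\sum_q|B_q|=\infty$. Then: (i) If $m\ge3$, the sets $(A_{1,m}(q,B_q))_{q\in\mathbb{N}}$ are quasi-independent on average, i.e. $\limsup_{Q\to\infty}\bigl(\sum_{q=1}^Q|A_{1,m}(q,B_q)|\bigr)^2\big/\sum_{q,r=1}^Q|A_{1,m}(q,B_q)\cap A_{1,m}(r,B_r)|>0$. (ii) If $m\ge2$, then for all $Q$, \[\sum_{1\le r\le q\le Q}\frac{\gcd(q,r)}{r}\bigl|A_{1,m}(r,B_r)\cap A_{1,m}(q,(r/q)^{1/m}B_q)\bigr|\ll\Bigl(\sum_{q=1}^Q|A_{1,m}(q,B_q)|\Bigr)^2 .\] (iii) If $m\ge1$, then for all $Q$, \[\sum_{1\le r\le q\le Q}\Bigl(\frac{\gcd(q,r)}{r}\Bigr)^2\bigl|A_{1,m}(r,B_r)\cap A_{1,m}(q,(r/q)^{2/m}B_q)\bigr|\ll\Bigl(\sum_{q=1}^Q|A_{1,m}(q,B_q)|\Bigr)^2 .\] The implied constants are independent of $Q$ (for $Q$ large enough that the right-hand sums are at least $1$). In particular the sets $(A_{1,m}(q,B_q))_q$ are $\max\{3-m,0\}$-QIA.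
   Context: Balls are max-norm balls in $\mathbb{R}^m/\mathbb{Z}^m$; $cB$ is the ball with the same centre as $B$ and radius multiplied by $c>0$; $|\cdot|$ is Lebesgue measure. For $q\in\mathbb{Z}$, $A_{1,m}(q,B)=\{\mathbf{x}\in[0,1]^m:q\mathbf{x}+\mathbf{p}\in B\text{ for some }\mathbf{p}\in\mathbb{Z}^m\}$; note $|A_{1,m}(q,B)|=|B|$. For $w\ge0$, the sets $(A_{1,m}(q,B_q))_{q\ge1}$ are $w$-QIA if $\limsup_{Q\to\infty}\bigl(\sum_{q\le Q}|B_q|\bigr)^2\bigl(\sum_{1\le r\le q\le Q}(\gcd(r,q)/r)^w|A_{1,m}(r,B_r)\cap A_{1,m}(q,(r/q)^{w/m}B_q)|\bigr)^{-1}>0$. *)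

theory Defs
  imports "HOL-Analysis.Analysis"
begin

text \<open>Dimension m = CARD('n). Points of R^m are vectors real^'n; subsets of the torus
R^m/Z^m are represented by their Z^m-periodic preimages in R^m.\<close>

definition unit_cube :: "(real^'n) set" where
  "unit_cube = {x. \<forall>i. 0 \<le> x$i \<and> x$i \<le> 1}"

definition torus_ball :: "real^'n \<Rightarrow> real \<Rightarrow> (real^'n) set" where
  "torus_ball c rho = {y. \<exists>p::int^'n. \<forall>i. \<bar>y$i - c$i - of_int (p$i)\<bar> < rho}"

definition torus_vol :: "(real^'n) set \<Rightarrow> real" where
  "torus_vol B = measure lebesgue (B \<inter> {x. \<forall>i. 0 \<le> x$i \<and> x$i < 1})"

definition A1m :: "nat \<Rightarrow> (real^'n) set \<Rightarrow> (real^'n) set" where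
  "A1m q B = {x \<in> unit_cube. \<exists>p::int^'n. (real q *\<^sub>R x + (\<chi> i. of_int (p$i))) \<in> B}"

text \<open>w-QIA for the sets A_{1,m}(q, B_q), B_q = torus_ball (c q) (rho q);
  the ball (r/q)^{w/m} B_q has the same centre and radius scaled.\<close>
definition w_QIA :: "real \<Rightarrow> (nat \<Rightarrow> real^'n) \<Rightarrow> (nat \<Rightarrow> real) \<Rightarrow> bool" where
  "w_QIA w c rho \<longleftrightarrow>
     limsup (\<lambda>Q. ereal ((\<Sum>q=1..Q. torus_vol (torus_ball (c q) (rho q)))\<^sup>2 /
        (\<Sum>q=1..Q. \<Sum>r=1..q. (real (gcd r q) / real r) powr w *
           measure lebesgue (A1m r (torus_ball (c r) (rho r)) \<inter>
              A1m q (torus_ball (c q) ((real r / real q) powr (w / real CARD('n)) * rho q)))))) > 0"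

definition QIA_avg :: "(nat \<Rightarrow> real^'n) \<Rightarrow> (nat \<Rightarrow> real) \<Rightarrow> bool" where
  "QIA_avg c rho \<longleftrightarrow>
     limsup (\<lambda>Q. ereal ((\<Sum>q=1..Q. measure lebesgue (A1m q (torus_ball (c q) (rho q))))\<^sup>2 /
        (\<Sum>q=1..Q. \<Sum>r=1..Q. measure lebesgue (A1m q (torus_ball (c q) (rho q)) \<inter>
              A1m r (torus_ball (c r) (rho r)))))) > 0"

end

theory Submission
  imports Defs
begin

text \<open>Everything is measured by \<open>V\<^sub>q = min(\<rho>\<^sub>q, 1)\<^sup>m\<close>: both \<open>|B\<^sub>q|\<close> and \<open>|A(q, B\<^sub>q)|\<close> are
  comparable to it, so divergence of \<open>\<Sum> |B\<^sub>q|\<close> makes \<open>\<Sum>\<^sub>q\<^sub>\<le>\<^sub>Q V\<^sub>q\<close> unbounded.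
  For the overlaps the problem splits into coordinates: the \<open>t \<in> [0,1]\<close> with \<open>r t\<close> near \<open>c\<close> and
  \<open>q t\<close> near \<open>e\<close> modulo 1 cluster around the centres of lattice points in a strip, and counting
  these gives \<open>|A(r, B) \<inter> A(q, B')| \<le> (32 a b + 8 gcd(r,q) min(a/r, b/q))\<^sup>m\<close>.
  Shrinking \<open>B\<^sub>q\<close> by \<open>(r/q)\<^sup>w\<^sup>/\<^sup>m\<close> and weighting by \<open>(gcd(r,q)/r)\<^sup>w\<close> turns this, for \<open>m + w \<ge> 3\<close>,
  into a constant times \<open>V\<^sub>r V\<^sub>q + k(r,q) (V\<^sub>r V\<^sub>q)\<^sup>1\<^sup>/\<^sup>2\<close> with \<open>k(r,q) = (gcd(r,q)\<^sup>2/(r q))\<^sup>3\<^sup>/\<^sup>2\<close>,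
  and the row sums of \<open>k\<close> are at most \<open>\<zeta>(3/2)\<^sup>2\<close>. So the pair sums are bounded by a constant
  times \<open>(\<Sum> V\<^sub>q)\<^sup>2 + \<Sum> V\<^sub>q\<close>, which is of order \<open>(\<Sum> V\<^sub>q)\<^sup>2\<close> once \<open>\<Sum> V\<^sub>q \<ge> 1\<close>.\<close>

section \<open>Simultaneous approximation in one dimension\<close>

lemma card_int_between_le:
  fixes x L :: real
  assumes "0 \<le> L"
  shows "real (card {j::int. x < of_int j \<and> of_int j < x + L}) \<le> L + 1"
proof -
  have "{j::int. x < of_int j \<and> of_int j < x + L} \<subseteq> {\<lceil>x\<rceil>..\<lfloor>x+L\<rfloor>}"
    by (auto simp: ceiling_le_iff le_floor_iff less_imp_le)
  then have "card {j::int. x < of_int j \<and> of_int j < x + L} \<le> nat (\<lfloor>x+L\<rfloor> - \<lceil>x\<rceil> + 1)"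
    using card_mono[of "{\<lceil>x\<rceil>..\<lfloor>x+L\<rfloor>}"] by simp
  moreover have "real_of_int (\<lfloor>x+L\<rfloor> - \<lceil>x\<rceil>) \<le> L"
    using of_int_floor_le[of "x+L"] le_of_int_ceiling[of x] by (simp only: of_int_diff)
  ultimately show ?thesis using assms by (cases "\<lfloor>x+L\<rfloor> - \<lceil>x\<rceil> + 1 \<ge> 0") auto
qed

text \<open>With \<open>d = gcd r q\<close>, the value of \<open>q p - r p'\<close> determines \<open>p\<close> modulo \<open>r / d\<close> (as \<open>q / d\<close> and
  \<open>r / d\<close> are coprime), so the quotient of \<open>p - lo\<close> by \<open>r / d\<close> recovers \<open>p\<close>.\<close>
lemma inj_lattice_coordinates:
  fixes r q :: nat and lo :: int
  assumes "r \<ge> 1"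
  defines "d \<equiv> gcd (int r) (int q)"
  shows "inj (\<lambda>(p::int, p'::int). ((int q * p - int r * p') div d, (p - lo) div (int r div d)))"
proof (rule injI, clarsimp)
  fix p1 p1' p2 p2' :: int
  assume e1: "(int q * p1 - int r * p1') div d = (int q * p2 - int r * p2') div d"
    and e2: "(p1 - lo) div (int r div d) = (p2 - lo) div (int r div d)"
  define r' where "r' = int r div d"
  define q' where "q' = int q div d"
  have dpos: "d > 0" using assms by simp
  have rr': "int r = r' * d" and qq': "int q = q' * d" unfolding r'_def q'_def d_def by simp_all
  have "0 < r' * d" using rr' assms by linarith
  then have r'pos: "r' > 0" using dpos by (simp add: zero_less_mult_iff)
  have cop: "coprime r' q'"
    unfolding r'_def q'_def d_def using div_gcd_coprime[of "int r" "int q"] assms by simp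
  have "int q * p1 - int r * p1' = int q * p2 - int r * p2'"
    using e1 unfolding d_def by (metis dvd_div_mult_self gcd_dvd1 gcd_dvd2 dvd_diff dvd_mult2)
  then have lin: "int q * (p1 - p2) = int r * (p1' - p2')" by (simp add: algebra_simps)
  then have "(q' * (p1 - p2)) * d = (r' * (p1' - p2')) * d" using rr' qq' by (simp add: algebra_simps)
  then have "q' * (p1 - p2) = r' * (p1' - p2')" using dpos by simp
  then have "r' dvd q' * (p1 - p2)" by (metis dvd_triv_left)
  then have "r' dvd (p1 - lo) - (p2 - lo)" using cop by (simp add: coprime_dvd_mult_right_iff)
  then have "(p1 - lo) mod r' = (p2 - lo) mod r'" by (simp only: mod_eq_dvd_iff)
  moreover have "(p1 - lo) div r' = (p2 - lo) div r'" using e2 unfolding r'_def .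
  ultimately have "p1 - lo = p2 - lo" by (metis div_mult_mod_eq)
  then have "p1 = p2" by simp
  moreover from this have "int r * (p1' - p2') = 0" using lin by simp
  then have "p1' = p2'" using assms by simp
  ultimately show "p1 = p2 \<and> p1' = p2'" ..
qed

text \<open>The coordinates of the previous lemma embed the strip into a box of size \<open>(2T/d + 1) \<times> 4d\<close>.\<close>
lemma card_lattice_strip_le:
  fixes r q :: nat and lo hi :: int and k T :: real
  assumes r: "r \<ge> 1" and T: "T > 0" and len: "real_of_int (hi - lo) \<le> real r + 2"
  defines "P \<equiv> {(p, p'). lo \<le> p \<and> p \<le> hi \<and> \<bar>real_of_int (int q * p - int r * p') - k\<bar> < T}"
  shows "finite P" and "real (card P) \<le> 8 * T + 4 * real (gcd r q)"
proof -
  define d where "d = gcd (int r) (int q)"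
  define r' where "r' = int r div d"
  define J where "J = {j::int. (k - T) / d < of_int j \<and> of_int j < (k - T) / d + 2 * T / d}"
  define K where "K = {0..(hi - lo) div r'}"
  define \<phi> where "\<phi> = (\<lambda>(p::int, p'::int). ((int q * p - int r * p') div d, (p - lo) div r'))"
  have dpos: "d > 0" using r d_def by simp
  have rr': "real r = real_of_int r' * real_of_int d"
    unfolding r'_def d_def by (metis dvd_div_mult_self gcd_dvd1 of_int_mult of_int_of_nat_eq)
  then have "0 < real_of_int r' * real_of_int d" using r by simp
  then have r'pos: "r' > 0" using dpos by (simp add: zero_less_mult_iff)
  have d_gcd: "real (gcd r q) = real_of_int d" unfolding d_def by (simp flip: gcd_int_def)
  have inj: "inj_on \<phi> P"
    using inj_lattice_coordinates[OF r, of q lo] unfolding \<phi>_def r'_def d_def by (rule inj_on_subset) simp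
  have img: "\<phi> ` P \<subseteq> J \<times> K"
  proof (intro image_subsetI, clarify)
    fix p p' assume "(p, p') \<in> P"
    then have pp': "lo \<le> p" "p \<le> hi" "\<bar>real_of_int (int q * p - int r * p') - k\<bar> < T"
      unfolding P_def by auto
    define j where "j = (int q * p - int r * p') div d"
    have "d dvd int q * p - int r * p'" unfolding d_def by simp
    then have "real_of_int (int q * p - int r * p') = of_int d * of_int j"
      unfolding j_def by (metis dvd_mult_div_cancel of_int_mult)
    then have "k - T < of_int d * of_int j" "of_int d * of_int j < k + T" using pp'(3) by linarith+
    then have "(k - T) / d < of_int j" "of_int j < (k + T) / d"
      using dpos by (simp_all add: divide_less_eq less_divide_eq mult.commute)
    then have "j \<in> J" unfolding J_def by (simp add: add_divide_distrib diff_divide_distrib)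
    moreover have "(p - lo) div r' \<in> K"
      using pp' r'pos unfolding K_def by (auto intro: zdiv_mono1 pos_imp_zdiv_nonneg_iff[THEN iffD2])
    ultimately show "\<phi> (p, p') \<in> J \<times> K" unfolding \<phi>_def j_def by simp
  qed
  have "J \<subseteq> {\<lceil>(k - T) / d\<rceil>..\<lfloor>(k - T) / d + 2 * T / d\<rfloor>}"
    unfolding J_def by (auto simp: ceiling_le_iff le_floor_iff less_imp_le)
  then have finJ: "finite J" using finite_subset by blast
  have finK: "finite K" unfolding K_def by simp
  show finP: "finite P"
    using finite_imageD[OF finite_subset[OF img] inj] finJ finK by simp
  have cardJ: "real (card J) \<le> 2 * T / d + 1"
    unfolding J_def by (rule card_int_between_le) (use T dpos in simp)
  have "real_of_int ((hi - lo) div r') \<le> (real r + 2) / real_of_int r'"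
    using real_of_int_div4[of "hi - lo" r'] len r'pos by (smt (verit) divide_right_mono of_int_pos)
  also have "\<dots> \<le> 3 * d"
    using rr' r'pos dpos r by (simp add: field_simps)
  finally have cardK: "real (card K) \<le> 4 * d"
    unfolding K_def using dpos by (cases "0 \<le> (hi - lo) div r'") auto
  have "real (card P) \<le> real (card J) * real (card K)"
    using card_inj_on_le[OF inj img] finJ finK by (simp add: card_cartesian_product flip: of_nat_mult)
  also have "\<dots> \<le> (2 * T / d + 1) * (4 * d)"
    using cardJ cardK by (intro mult_mono) auto
  also have "\<dots> = 8 * T + 4 * real (gcd r q)" using dpos d_gcd by (simp add: field_simps)
  finally show "real (card P) \<le> 8 * T + 4 * real (gcd r q)" .
qed

lemma abs_sub_divide_le:
  fixes n :: nat and t x A :: real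
  assumes "\<bar>n * t - x\<bar> < A" "n \<ge> 1"
  shows "\<bar>t - x / n\<bar> \<le> A / n"
proof -
  have "t - x / n = (n * t - x) / n" using assms(2) by (simp add: field_simps)
  then show ?thesis using assms by (simp add: divide_right_mono)
qed

lemma approx_pair_in_strip:
  fixes r q :: nat and t a b c e :: real and p p' :: int
  assumes t: "0 \<le> t" "t \<le> 1" and p: "\<bar>r * t - c - p\<bar> < a" and p': "\<bar>q * t - e - p'\<bar> < b"
    and r: "r \<ge> 1" and q: "q \<ge> 1" and a: "a \<le> 1"
  shows "\<lceil>-c - 1\<rceil> \<le> p \<and> p \<le> \<lfloor>real r - c + 1\<rfloor>"
    and "\<bar>real_of_int (int q * p - int r * p') - (r * e - q * c)\<bar> < q * a + r * b"
proof -
  have "0 \<le> r * t" "r * t \<le> r" using t by (simp_all add: mult_left_le)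
  moreover have "r * t - c - p < a" "- a < r * t - c - p" using p by (simp_all add: abs_less_iff)
  ultimately show "\<lceil>-c - 1\<rceil> \<le> p \<and> p \<le> \<lfloor>real r - c + 1\<rfloor>"
    using a unfolding ceiling_le_iff le_floor_iff by linarith
  have "real_of_int (int q * p - int r * p') - (r * e - q * c) = r * (q * t - e - p') - q * (r * t - c - p)"
    by (simp add: algebra_simps)
  moreover have "\<bar>r * (q * t - e - p')\<bar> < r * b" "\<bar>q * (r * t - c - p)\<bar> < q * a"
    using p p' r q by (simp_all add: abs_mult)
  ultimately show "\<bar>real_of_int (int q * p - int r * p') - (r * e - q * c)\<bar> < q * a + r * b"
    by linarith
qed

text \<open>The points \<open>t \<in> [0,1]\<close> with \<open>\<parallel>r t - c\<parallel> < a\<close> and \<open>\<parallel>q t - e\<parallel> < b\<close> lie near the centres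
  \<open>(c + p) / r\<close> or \<open>(e + p') / q\<close> of lattice points \<open>(p, p')\<close> in a strip of width \<open>q a + r b\<close>.\<close>
lemma simultaneous_approx_cover:
  fixes r q :: nat and a b c e :: real
  assumes r: "r \<ge> 1" and q: "q \<ge> 1" and a: "0 < a" "a \<le> 1" and b: "0 < b"
  defines "h \<equiv> min (a / r) (b / q)"
  obtains M :: "real set" where "finite M"
    and "real (card M) * (2 * h) \<le> 32 * a * b + 8 * real (gcd r q) * h"
    and "\<And>(t::real) p p'. 0 \<le> t \<Longrightarrow> t \<le> 1 \<Longrightarrow> \<bar>r * t - c - of_int p\<bar> < a \<Longrightarrow>
           \<bar>q * t - e - of_int p'\<bar> < b \<Longrightarrow> \<exists>\<mu>\<in>M. \<bar>t - \<mu>\<bar> \<le> h"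
proof -
  define T where "T = q * a + r * b"
  define lo where "lo = \<lceil>-c - 1\<rceil>"
  define hi where "hi = \<lfloor>real r - c + 1\<rfloor>"
  define P where "P = {(p, p'). lo \<le> p \<and> p \<le> hi \<and>
    \<bar>real_of_int (int q * p - int r * p') - (r * e - q * c)\<bar> < T}"
  define \<mu> where "\<mu> = (\<lambda>(p::int, p'::int). if a / r \<le> b / q then (c + p) / r else (e + p') / q)"
  have T: "T > 0" unfolding T_def using a b r q by (simp add: add_pos_pos)
  have len: "real_of_int (hi - lo) \<le> real r + 2"
    using of_int_floor_le[of "real r - c + 1"] le_of_int_ceiling[of "-c - 1"]
    unfolding hi_def lo_def by (simp only: of_int_diff; linarith)
  note strip = card_lattice_strip_le[OF r T len, of q "r * e - q * c", folded P_def]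
  have "h \<le> b / q" "h \<le> a / r" unfolding h_def by simp_all
  then have "q * h \<le> b" "r * h \<le> a" using r q by (simp_all add: le_divide_eq mult.commute)
  then have "a * (q * h) + b * (r * h) \<le> a * b + b * a"
    using a b by (intro add_mono mult_left_mono) auto
  then have "T * h \<le> 2 * a * b" unfolding T_def by (simp add: algebra_simps)
  moreover have "h \<ge> 0" unfolding h_def using a b by simp
  moreover have "real (card (\<mu> ` P)) \<le> 8 * T + 4 * real (gcd r q)"
    using strip(2) card_image_le[OF strip(1), of \<mu>] by linarith
  ultimately have "real (card (\<mu> ` P)) * (2 * h) \<le> (8 * T + 4 * real (gcd r q)) * (2 * h)"
    by (simp add: mult_right_mono)
  also have "\<dots> \<le> 32 * a * b + 8 * real (gcd r q) * h"
    using \<open>T * h \<le> 2 * a * b\<close> by (simp add: algebra_simps)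
  finally have "real (card (\<mu> ` P)) * (2 * h) \<le> 32 * a * b + 8 * real (gcd r q) * h" .
  moreover have "\<exists>m\<in>\<mu> ` P. \<bar>t - m\<bar> \<le> h"
    if "0 \<le> t" "t \<le> 1" and p: "\<bar>r * t - c - of_int p\<bar> < a" and p': "\<bar>q * t - e - of_int p'\<bar> < b"
    for t :: real and p p'
  proof -
    have "(p, p') \<in> P"
      using approx_pair_in_strip[OF that r q a(2)] unfolding P_def lo_def hi_def T_def by simp
    moreover have "\<bar>t - (c + p) / r\<bar> \<le> a / r" "\<bar>t - (e + p') / q\<bar> \<le> b / q"
      using abs_sub_divide_le[of r t "c + p" a] abs_sub_divide_le[of q t "e + p'" b] p p' r q
      by (simp_all add: algebra_simps)
    then have "\<bar>t - \<mu> (p, p')\<bar> \<le> h" unfolding \<mu>_def h_def by simp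
    ultimately show ?thesis by blast
  qed
  ultimately show thesis using that strip(1) by blast
qed

section \<open>Measure of intersections\<close>

lemma open_torus_ball: "open (torus_ball (c::real^'n) \<rho>)"
proof -
  have "torus_ball c \<rho> = (\<Union>P::int^'n. {x. \<forall>i. x$i \<in> {t. \<bar>t - c$i - of_int (P$i)\<bar> < \<rho>}})"
    unfolding torus_ball_def by auto
  moreover have "open {t. \<bar>t - c$i - of_int (P$i)\<bar> < \<rho>}" for i and P :: "int^'n"
    by (intro open_Collect_less continuous_intros)
  then have "open {x. \<forall>i. x$i \<in> {t. \<bar>t - c$i - of_int (P$i)\<bar> < \<rho>}}" for P :: "int^'n"
    by (intro open_vector_box) blast
  ultimately show ?thesis by auto
qed

lemma A1m_lmeasurable:
  fixes B :: "(real^'n) set"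
  assumes "open B"
  shows "A1m r B \<in> lmeasurable"
proof (rule bounded_set_imp_lmeasurable)
  have "A1m r B = cbox 0 1 \<inter> (\<Union>p::int^'n. (\<lambda>x. real r *\<^sub>R x + (\<chi> i. of_int (p$i))) -` B)"
    unfolding A1m_def unit_cube_def by (auto simp: mem_box_cart)
  moreover have "open (\<Union>p::int^'n. (\<lambda>x. real r *\<^sub>R x + (\<chi> i. of_int (p$i))) -` B)"
    using assms by (intro open_UN ballI continuous_open_vimage) (auto intro!: continuous_intros)
  ultimately show "A1m r B \<in> sets lebesgue"
    by (metis borel_open fmeasurableD lmeasurable_cbox sets.Int sets_completionI_sets sets_lborel)
  show "bounded (A1m r B)"
    by (rule bounded_subset[of "cbox 0 1"]) (auto simp: A1m_def unit_cube_def mem_box_cart)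
qed

lemma torus_ball_unit_cell_lmeasurable:
  "torus_ball (c::real^'n) \<rho> \<inter> {x. \<forall>i. 0 \<le> x$i \<and> x$i < 1} \<in> lmeasurable"
proof (rule bounded_set_imp_lmeasurable)
  have "{x::real^'n. \<forall>i. 0 \<le> x$i \<and> x$i < 1} \<in> sets borel" by measurable
  then show "torus_ball c \<rho> \<inter> {x. \<forall>i. 0 \<le> x$i \<and> x$i < 1} \<in> sets lebesgue"
    using borel_open[OF open_torus_ball] by (intro sets.Int sets_completionI_sets) simp_all
  show "bounded (torus_ball c \<rho> \<inter> {x. \<forall>i. 0 \<le> x$i \<and> x$i < 1})"
    by (rule bounded_subset[of "cbox 0 1"]) (auto simp: mem_box_cart less_imp_le)
qed

lemma A1m_torus_ball_coord:
  fixes x c :: "real^'n"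
  assumes "x \<in> A1m r (torus_ball c \<rho>)"
  shows "0 \<le> x$i \<and> x$i \<le> 1 \<and> (\<exists>P::int. \<bar>r * x$i - c$i - P\<bar> < \<rho>)"
proof -
  obtain p :: "int^'n" where x: "x \<in> unit_cube"
    and "real r *\<^sub>R x + (\<chi> i. of_int (p$i)) \<in> torus_ball c \<rho>"
    using assms unfolding A1m_def by blast
  then obtain P :: "int^'n" where "\<bar>r * x$i + p$i - c$i - P$i\<bar> < \<rho>"
    unfolding torus_ball_def by auto
  then have "\<bar>r * x$i - c$i - of_int (P$i - p$i)\<bar> < \<rho>" by (simp add: algebra_simps)
  then show ?thesis using x unfolding unit_cube_def by blast
qed

text \<open>Only the distance to the nearest integer matters, and it never exceeds \<open>1/2\<close>.\<close>
lemma ex_int_dist_lt_min_one: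
  fixes y \<rho> :: real
  assumes "\<exists>P::int. \<bar>y - P\<bar> < \<rho>"
  shows "\<exists>P::int. \<bar>y - P\<bar> < min \<rho> 1"
proof (cases "\<rho> \<le> 1")
  case False
  have "\<bar>y - of_int (round y)\<bar> \<le> 1/2" using of_int_round_abs_le[of y] by (simp add: abs_minus_commute)
  then show ?thesis using False by (intro exI[of _ "round y"]) simp
qed (use assms in simp)

lemma measure_le_of_coordinate_nets:
  fixes X :: "(real^'n) set" and M :: "'n \<Rightarrow> real set"
  assumes fin: "\<And>i. finite (M i)" and card: "\<And>i. real (card (M i)) * (2 * h) \<le> B" and h: "h \<ge> 0"
    and net: "\<And>x i. x \<in> X \<Longrightarrow> \<exists>\<mu>\<in>M i. \<bar>x$i - \<mu>\<bar> \<le> h"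
  shows "measure lebesgue X \<le> B ^ CARD('n)"
proof -
  define F where "F = PiE UNIV M"
  define cube where "cube = (\<lambda>f::'n \<Rightarrow> real. cbox (\<chi> i. f i - h) (\<chi> i. f i + h))"
  have finF: "finite F" unfolding F_def using fin by (simp add: finite_PiE)
  have cover: "X \<subseteq> (\<Union>f\<in>F. cube f)"
  proof
    fix x assume "x \<in> X"
    then obtain f where f: "\<And>i. f i \<in> M i" "\<And>i. \<bar>x$i - f i\<bar> \<le> h" using net by metis
    then have "x \<in> cube f" unfolding cube_def mem_box_cart by (simp add: abs_le_iff algebra_simps)
    moreover have "f \<in> F" unfolding F_def PiE_UNIV_domain using f(1) by blast
    ultimately show "x \<in> (\<Union>f\<in>F. cube f)" by auto
  qed
  have "measure lebesgue (\<Union>f\<in>F. cube f) \<le> (\<Sum>f\<in>F. measure lebesgue (cube f))"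
    using finF by (intro measure_UNION_le) (auto simp: cube_def)
  also have "\<dots> = real (card F) * (2 * h) ^ CARD('n)"
    using h unfolding cube_def by (simp add: content_cbox_cart interval_ne_empty_cart)
  also have "\<dots> = (\<Prod>i\<in>UNIV. real (card (M i)) * (2 * h))"
    unfolding F_def by (simp add: card_PiE prod.distrib)
  also have "\<dots> \<le> B ^ CARD('n)"
    using prod_mono[of UNIV "\<lambda>i. real (card (M i)) * (2 * h)" "\<lambda>_. B"] card h by simp
  finally have "measure lebesgue (\<Union>f\<in>F. cube f) \<le> B ^ CARD('n)" .
  moreover have "measure lebesgue X \<le> measure lebesgue (\<Union>f\<in>F. cube f)"
  proof (cases "X \<in> sets lebesgue")
    case True
    then show ?thesis
      using cover finF by (intro measure_mono_fmeasurable) (auto simp: cube_def)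
  qed (simp add: measure_notin_sets)
  ultimately show ?thesis by linarith
qed

lemma measure_A1m_inter_le:
  fixes c1 c2 :: "real^'n" and r q :: nat and \<rho> \<sigma> :: real
  assumes r: "r \<ge> 1" and q: "q \<ge> 1" and \<rho>: "\<rho> > 0" and \<sigma>: "\<sigma> > 0"
  shows "measure lebesgue (A1m r (torus_ball c1 \<rho>) \<inter> A1m q (torus_ball c2 \<sigma>))
     \<le> (32 * min \<rho> 1 * min \<sigma> 1 + 8 * real (gcd r q) * min (min \<rho> 1 / r) (min \<sigma> 1 / q)) ^ CARD('n)"
proof -
  define a where "a = min \<rho> 1"
  define b where "b = min \<sigma> 1"
  define h where "h = min (a / r) (b / q)"
  have a: "0 < a" "a \<le> 1" and b: "0 < b" using \<rho> \<sigma> a_def b_def by auto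
  have "\<exists>N. finite N \<and> real (card N) * (2 * h) \<le> 32 * a * b + 8 * real (gcd r q) * h \<and>
    (\<forall>(t::real) p p'. 0 \<le> t \<and> t \<le> 1 \<and> \<bar>r * t - c1$i - of_int p\<bar> < a \<and>
       \<bar>q * t - c2$i - of_int p'\<bar> < b \<longrightarrow> (\<exists>\<mu>\<in>N. \<bar>t - \<mu>\<bar> \<le> h))" for i
    by (rule simultaneous_approx_cover[OF r q a b, of "c1$i" "c2$i", folded h_def]) blast
  then obtain M :: "'n \<Rightarrow> real set" where M: "\<And>i. finite (M i)"
    "\<And>i. real (card (M i)) * (2 * h) \<le> 32 * a * b + 8 * real (gcd r q) * h"
    "\<And>i (t::real) p p'. 0 \<le> t \<Longrightarrow> t \<le> 1 \<Longrightarrow> \<bar>r * t - c1$i - of_int p\<bar> < a \<Longrightarrow>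
       \<bar>q * t - c2$i - of_int p'\<bar> < b \<Longrightarrow> \<exists>\<mu>\<in>M i. \<bar>t - \<mu>\<bar> \<le> h"
    by metis
  show ?thesis unfolding a_def[symmetric] b_def[symmetric] h_def[symmetric]
  proof (rule measure_le_of_coordinate_nets[OF M(1,2)])
    show "h \<ge> 0" unfolding h_def using a b by simp
    fix x i assume "x \<in> A1m r (torus_ball c1 \<rho>) \<inter> A1m q (torus_ball c2 \<sigma>)"
    then have "0 \<le> x$i" "x$i \<le> 1" "\<exists>P::int. \<bar>r * x$i - c1$i - P\<bar> < a"
      "\<exists>P::int. \<bar>q * x$i - c2$i - P\<bar> < b"
      using A1m_torus_ball_coord ex_int_dist_lt_min_one unfolding a_def b_def by blast+
    then show "\<exists>\<mu>\<in>M i. \<bar>x$i - \<mu>\<bar> \<le> h" using M(3) by blast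
  qed
qed

section \<open>Single sets\<close>

lemma box_coord_near_lattice:
  fixes c' t h \<delta> :: real and p r :: nat
  assumes c': "0 \<le> c'" "c' < 1" and h: "0 < h" "h \<le> 1/4"
    and \<delta>: "\<delta> = (if c' \<le> 1/2 then 0 else -h)" and pr: "p < r"
    and t: "(c' + p + \<delta>) / r \<le> t" "t \<le> (c' + p + \<delta> + h) / r"
  shows "0 \<le> t \<and> t < 1 \<and> \<bar>r * t - c' - p\<bar> \<le> h"
proof -
  have rpos: "real r > 0" using pr by simp
  have t1: "c' + p + \<delta> \<le> r * t" using t(1) rpos by (simp add: divide_le_eq mult.commute)
  have t2: "r * t \<le> c' + p + \<delta> + h" using t(2) rpos by (simp add: le_divide_eq mult.commute)
  have "0 \<le> c' + p + \<delta>" using c' h \<delta> by (cases "c' \<le> 1/2") auto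
  then have "0 \<le> r * t" using t1 by linarith
  then have "0 \<le> t" using rpos by (simp add: zero_le_mult_iff)
  moreover have "c' + p + \<delta> + h < r" using c' h \<delta> pr by (cases "c' \<le> 1/2") auto
  then have "r * t < r * 1" using t2 by linarith
  then have "t < 1" using rpos by simp
  moreover have "\<bar>r * t - c' - p\<bar> \<le> h" using t1 t2 \<delta> h by (cases "c' \<le> 1/2") auto
  ultimately show ?thesis by blast
qed

text \<open>Inside each of the \<open>r\<^sup>m\<close> cells of side \<open>1/r\<close> there is a cube of side at least
  \<open>min \<rho> 1 / (4 r)\<close> whose points \<open>x\<close> have \<open>r x\<close> within \<open>\<rho>\<close> of \<open>c\<close> modulo \<open>\<int>\<^sup>m\<close>; the shift \<open>\<delta>\<close>
  keeps the cube inside \<open>[0,1)\<^sup>m\<close> when the fractional part of \<open>c\<close> is close to \<open>1\<close>.\<close>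
lemma near_lattice_cubes:
  fixes c :: "real^'n" and r :: nat and \<rho> :: real
  assumes r: "r \<ge> 1" and \<rho>: "\<rho> > 0"
  obtains I :: "('n \<Rightarrow> nat) set" and cube :: "('n \<Rightarrow> nat) \<Rightarrow> (real^'n) set"
  where "finite I" and "disjoint_family_on cube I" and "\<And>p. cube p \<in> lmeasurable"
    and "\<And>p. p \<in> I \<Longrightarrow> cube p \<subseteq>
           {x. (\<forall>i. 0 \<le> x$i \<and> x$i < 1) \<and> (\<exists>P::int^'n. \<forall>i. \<bar>r * x$i - c$i - P$i\<bar> < \<rho>)}"
    and "(1/4) ^ CARD('n) * (min \<rho> 1) ^ CARD('n) \<le> (\<Sum>p\<in>I. measure lebesgue (cube p))"
proof -
  define h where "h = min \<rho> (1/2) / 2"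
  define c' where "c' = (\<lambda>i. c$i - of_int \<lfloor>c$i\<rfloor>)"
  define \<delta> where "\<delta> = (\<lambda>i. if c' i \<le> 1/2 then 0 else -h)"
  define cube where "cube = (\<lambda>p::'n\<Rightarrow>nat.
    cbox (\<chi> i. (c' i + p i + \<delta> i) / r) (\<chi> i. (c' i + p i + \<delta> i + h) / r))"
  define I where "I = PiE (UNIV::'n set) (\<lambda>_. {..<r})"
  have h: "0 < h" "h \<le> 1/4" "h < \<rho>" using \<rho> h_def by auto
  have c': "0 \<le> c' i" "c' i < 1" for i unfolding c'_def by (simp_all add: floor_le_iff) linarith
  have rpos: "real r > 0" using r by simp
  have mem: "(c' i + p i + \<delta> i) / r \<le> x$i \<and> x$i \<le> (c' i + p i + \<delta> i + h) / r" if "x \<in> cube p" for x p i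
    using that unfolding cube_def mem_box_cart by simp
  have disj: "disjoint_family_on cube I"
  proof (unfold disjoint_family_on_def, intro ballI impI equals0I)
    fix p p' x assume "p \<noteq> p'" and x: "x \<in> cube p \<inter> cube p'"
    then obtain i where i: "p i \<noteq> p' i" by blast
    have "c' i + p i + \<delta> i \<le> r * x$i" "r * x$i \<le> c' i + p i + \<delta> i + h"
      "c' i + p' i + \<delta> i \<le> r * x$i" "r * x$i \<le> c' i + p' i + \<delta> i + h"
      using mem[of x p i] mem[of x p' i] x rpos by (simp_all add: divide_le_eq le_divide_eq mult.commute)
    then have "\<bar>real (p i) - real (p' i)\<bar> \<le> h" by linarith
    moreover have "\<bar>real (p i) - real (p' i)\<bar> \<ge> 1" using i by linarith
    ultimately show False using h by linarith
  qed
  have near_set: "cube p \<subseteq> {x. (\<forall>i. 0 \<le> x$i \<and> x$i < 1) \<and> (\<exists>P::int^'n. \<forall>i. \<bar>r * x$i - c$i - P$i\<bar> < \<rho>)}"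
    if p: "p \<in> I" for p
  proof clarify
    fix x assume x: "x \<in> cube p"
    have near: "0 \<le> x$i \<and> x$i < 1 \<and> \<bar>r * x$i - c' i - p i\<bar> \<le> h" for i
    proof (rule box_coord_near_lattice[OF c' h(1,2)])
      show "\<delta> i = (if c' i \<le> 1/2 then 0 else -h)" unfolding \<delta>_def ..
      show "p i < r" using p unfolding I_def by auto
    qed (use mem[OF x, of i] in auto)
    have eq: "r * x$i - c$i - of_int (int (p i) - \<lfloor>c$i\<rfloor>) = r * x$i - c' i - p i" for i
      unfolding c'_def by simp
    have "\<bar>r * x$i - c$i - (\<chi> i. int (p i) - \<lfloor>c$i\<rfloor>)$i\<bar> < \<rho>" for i
      using near[of i] h by (simp only: vec_lambda_beta eq) linarith
    then show "(\<forall>i. 0 \<le> x$i \<and> x$i < 1) \<and> (\<exists>P::int^'n. \<forall>i. \<bar>r * x$i - c$i - P$i\<bar> < \<rho>)"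
      using near by blast
  qed
  have "measure lebesgue (cube p) = (h / r) ^ CARD('n)" for p
  proof -
    have "(c' i + p i + \<delta> i + h) / r - (c' i + p i + \<delta> i) / r = h / r" for i
      by (simp add: diff_divide_distrib[symmetric])
    then show ?thesis
      using h rpos unfolding cube_def by (simp add: content_cbox_cart interval_ne_empty_cart divide_right_mono)
  qed
  then have "(\<Sum>p\<in>I. measure lebesgue (cube p)) = h ^ CARD('n)"
    using rpos unfolding I_def by (simp add: card_PiE power_mult_distrib[symmetric])
  moreover have "(1/4) ^ CARD('n) * (min \<rho> 1) ^ CARD('n) \<le> h ^ CARD('n)"
    using \<rho> unfolding h_def power_mult_distrib[symmetric] by (intro power_mono) auto
  ultimately have "(1/4) ^ CARD('n) * (min \<rho> 1) ^ CARD('n) \<le> (\<Sum>p\<in>I. measure lebesgue (cube p))"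
    by simp
  moreover have "finite I" unfolding I_def by (simp add: finite_PiE)
  moreover have "cube p \<in> lmeasurable" for p unfolding cube_def by simp
  ultimately show thesis using that disj near_set by blast
qed

lemma measure_ge_of_near_lattice:
  fixes c :: "real^'n" and X :: "(real^'n) set" and r :: nat
  assumes r: "r \<ge> 1" and \<rho>: "\<rho> > 0" and X: "X \<in> lmeasurable"
    and sub: "{x. (\<forall>i. 0 \<le> x$i \<and> x$i < 1) \<and> (\<exists>P::int^'n. \<forall>i. \<bar>r * x$i - c$i - P$i\<bar> < \<rho>)} \<subseteq> X"
  shows "(1/4) ^ CARD('n) * (min \<rho> 1) ^ CARD('n) \<le> measure lebesgue X"
proof -
  obtain I :: "('n \<Rightarrow> nat) set" and cube :: "('n \<Rightarrow> nat) \<Rightarrow> (real^'n) set" where I: "finite I" "disjoint_family_on cube I" "\<And>p. cube p \<in> lmeasurable"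
    "\<And>p. p \<in> I \<Longrightarrow> cube p \<subseteq>
       {x. (\<forall>i. 0 \<le> x$i \<and> x$i < 1) \<and> (\<exists>P::int^'n. \<forall>i. \<bar>r * x$i - c$i - P$i\<bar> < \<rho>)}"
    "(1/4) ^ CARD('n) * (min \<rho> 1) ^ CARD('n) \<le> (\<Sum>p\<in>I. measure lebesgue (cube p))"
    using near_lattice_cubes[OF r \<rho>, of c] by blast
  have "(\<Sum>p\<in>I. measure lebesgue (cube p)) = measure lebesgue (\<Union>p\<in>I. cube p)"
  proof (rule measure_finite_Union[symmetric])
    show "emeasure lebesgue (cube p) \<noteq> \<infinity>" for p using fmeasurableD2[OF I(3)] by simp
  qed (use I(1-3) in auto)
  also have "\<dots> \<le> measure lebesgue X"
  proof (rule measure_mono_fmeasurable[OF _ _ X])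
    show "(\<Union>p\<in>I. cube p) \<subseteq> X" using I(4) sub by blast
    show "(\<Union>p\<in>I. cube p) \<in> sets lebesgue" using I(1,3) by (intro sets.finite_UN fmeasurableD)
  qed
  finally show ?thesis using I(5) by linarith
qed

lemma measure_A1m_ge:
  fixes c :: "real^'n" and r :: nat
  assumes "r \<ge> 1" and "\<rho> > 0"
  shows "(1/4) ^ CARD('n) * (min \<rho> 1) ^ CARD('n) \<le> measure lebesgue (A1m r (torus_ball c \<rho>))"
proof (rule measure_ge_of_near_lattice[OF assms A1m_lmeasurable[OF open_torus_ball]], clarify)
  fix x :: "real^'n" and P :: "int^'n"
  assume "\<forall>i. 0 \<le> x$i \<and> x$i < 1" "\<forall>i. \<bar>r * x$i - c$i - P$i\<bar> < \<rho>"
  then show "x \<in> A1m r (torus_ball c \<rho>)"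
    unfolding A1m_def unit_cube_def torus_ball_def by (fastforce intro: exI[of _ 0] less_imp_le)
qed

lemma torus_vol_ge:
  fixes c :: "real^'n"
  assumes "\<rho> > 0"
  shows "(1/4) ^ CARD('n) * (min \<rho> 1) ^ CARD('n) \<le> torus_vol (torus_ball c \<rho>)"
  unfolding torus_vol_def
  by (rule measure_ge_of_near_lattice[of 1, OF _ assms torus_ball_unit_cell_lmeasurable])
    (auto simp: torus_ball_def)

text \<open>For \<open>r = q = 1\<close> the intersection bound is an upper bound for a single ball.\<close>
lemma torus_vol_le:
  fixes c :: "real^'n"
  assumes \<rho>: "\<rho> > 0"
  shows "torus_vol (torus_ball c \<rho>) \<le> 40 ^ CARD('n) * (min \<rho> 1) ^ CARD('n)"
proof -
  have "torus_ball c \<rho> \<inter> {x. \<forall>i. 0 \<le> x$i \<and> x$i < 1} \<subseteq> A1m 1 (torus_ball c \<rho>) \<inter> A1m 1 (torus_ball c \<rho>)"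
  proof clarify
    fix x assume "x \<in> torus_ball c \<rho>" "\<forall>i. 0 \<le> x$i \<and> x$i < 1"
    moreover have "real 1 *\<^sub>R x + (\<chi> i. of_int ((0::int^'n)$i)) = x" by (simp add: vec_eq_iff)
    ultimately have "\<exists>p::int^'n. real 1 *\<^sub>R x + (\<chi> i. of_int (p$i)) \<in> torus_ball c \<rho>"
      "x \<in> unit_cube"
      unfolding unit_cube_def by (metis, simp add: less_imp_le)
    then show "x \<in> A1m 1 (torus_ball c \<rho>) \<inter> A1m 1 (torus_ball c \<rho>)"
      unfolding A1m_def by simp
  qed
  then have "torus_vol (torus_ball c \<rho>) \<le> measure lebesgue (A1m 1 (torus_ball c \<rho>) \<inter> A1m 1 (torus_ball c \<rho>))"
    unfolding torus_vol_def
    by (intro measure_mono_fmeasurable) (auto simp: A1m_lmeasurable open_torus_ball fmeasurableD torus_ball_unit_cell_lmeasurable)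
  also have "\<dots> \<le> (32 * min \<rho> 1 * min \<rho> 1 + 8 * min \<rho> 1) ^ CARD('n)"
    using measure_A1m_inter_le[of 1 1 \<rho> \<rho> c c] \<rho> by simp
  also have "\<dots> \<le> (40 * min \<rho> 1) ^ CARD('n)"
    using \<rho> by (intro power_mono) (auto simp: min_def)
  finally show ?thesis by (simp add: power_mult_distrib)
qed

section \<open>The gcd kernel\<close>

definition gcd_kernel :: "nat \<Rightarrow> nat \<Rightarrow> real" where
  "gcd_kernel r q = (real (gcd r q) ^ 2 / (real r * real q)) powr (3/2)"

lemma gcd_kernel_nonneg: "gcd_kernel r q \<ge> 0"
  unfolding gcd_kernel_def by simp

lemma gcd_kernel_commute: "gcd_kernel r q = gcd_kernel q r"
  unfolding gcd_kernel_def by (simp add: gcd.commute mult.commute)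

lemma gcd_weight_le_gcd_kernel:
  fixes r q m :: nat and w :: real
  assumes r: "r \<ge> 1" and q: "q \<ge> 1" and mw: "real m + w \<ge> 3"
  defines "d \<equiv> real (gcd r q)"
  shows "(d / r) powr w * d ^ m * sqrt ((real r / real q) powr w / (real r * real q) ^ m) \<le> gcd_kernel r q"
proof -
  have d: "0 < d" "d \<le> real r" "d \<le> real q"
    unfolding d_def using r q by (simp_all add: gcd_le1_nat gcd_le2_nat)
  have "(d / r) powr w * d ^ m * sqrt ((real r / real q) powr w / (real r * real q) ^ m)
      = (d / r) powr w * d powr m * ((r / q) powr w / (r * q) powr m) powr (1/2)"
    using d r q by (simp add: powr_realpow powr_half_sqrt)
  also have "\<dots> = (d^2 / (real r * real q)) powr ((real m + w) / 2)"
    using d r q by (simp add: powr_def ln_div ln_mult exp_add[symmetric] ln_realpow algebra_simps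
        exp_diff[symmetric] divide_simps)
  also have "\<dots> \<le> (d^2 / (real r * real q)) powr (3/2)"
  proof (rule powr_mono')
    have "d ^ 2 \<le> real r * real q" using d by (simp add: power2_eq_square mult_mono)
    then show "d^2 / (real r * real q) \<le> 1" using r q by simp
  qed (use mw in auto)
  finally show ?thesis unfolding gcd_kernel_def d_def .
qed

lemma min_power_le_sqrt:
  fixes x y :: real
  assumes "0 \<le> x" "0 \<le> y"
  shows "min x y ^ m \<le> sqrt (x ^ m * y ^ m)"
proof (rule real_le_rsqrt)
  have "min x y * min x y \<le> x * y" using assms by (intro mult_mono) auto
  then have "(min x y * min x y) ^ m \<le> (x * y) ^ m" using assms by (intro power_mono) auto
  then show "(min x y ^ m)\<^sup>2 \<le> x ^ m * y ^ m"
    by (simp add: power2_eq_square power_mult_distrib)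
qed

text \<open>If \<open>\<sigma> \<ge> 1\<close> the term is at most \<open>a\<^sup>m\<close>; otherwise the shrinking factor \<open>\<kappa>\<^sup>m = (r/q)\<^sup>w\<close> turns it
  into the kernel, which is where \<open>m + w \<ge> 3\<close> is needed.\<close>
lemma weighted_gcd_term_le:
  fixes r q m :: nat and a \<sigma> \<kappa> w :: real
  assumes r: "r \<ge> 1" and q: "q \<ge> 1" and a: "0 < a" "a \<le> 1" and \<sigma>: "\<sigma> > 0" and w: "w \<ge> 0"
    and mw: "real m + w \<ge> 3" and m: "m \<ge> 1"
    and \<kappa>: "\<kappa> = (real r / real q) powr (w / real m)" "\<kappa> \<le> 1"
  defines "d \<equiv> real (gcd r q)"
  shows "(d / r) powr w * (d * min (a / r) (min (\<kappa> * \<sigma>) 1 / q)) ^ m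
    \<le> a ^ m * (min \<sigma> 1) ^ m + gcd_kernel r q * sqrt (a ^ m * (min \<sigma> 1) ^ m)"
proof -
  define h where "h = min (a / r) (min (\<kappa> * \<sigma>) 1 / q)"
  define f where "f = (d / r) powr w"
  have d: "0 < d" "d \<le> real r" unfolding d_def using r by (simp_all add: gcd_le1_nat)
  have \<kappa>0: "\<kappa> > 0" using \<kappa> r q by simp
  have h: "0 \<le> h" "h \<le> a / r" unfolding h_def using a \<sigma> \<kappa>0 by auto
  have f: "0 \<le> f" "f \<le> 1" unfolding f_def using d w by (auto intro!: powr_le1)
  have rhs: "0 \<le> gcd_kernel r q * sqrt (a ^ m * (min \<sigma> 1) ^ m)"
    using a \<sigma> gcd_kernel_nonneg by simp
  have "f * (d * h) ^ m \<le> a ^ m * (min \<sigma> 1) ^ m + gcd_kernel r q * sqrt (a ^ m * (min \<sigma> 1) ^ m)"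
  proof (cases "\<sigma> \<ge> 1")
    case True
    have "d * h \<le> d * (a / r)" using h d by (intro mult_left_mono) auto
    also have "\<dots> \<le> a" using d a by (simp add: field_simps mult_right_mono)
    finally have "(d * h) ^ m \<le> a ^ m" using h d by (intro power_mono) auto
    moreover have "f * (d * h) ^ m \<le> (d * h) ^ m"
      using f h d by (intro mult_left_le_one_le) auto
    ultimately have "f * (d * h) ^ m \<le> a ^ m" by linarith
    then show ?thesis using True rhs by simp
  next
    case False
    have "min (\<kappa> * \<sigma>) 1 / q \<le> \<kappa> * \<sigma> / q" using q by (simp add: divide_right_mono)
    then have "h \<le> min (a / r) (\<kappa> * \<sigma> / q)" unfolding h_def by (auto simp: min_def)
    then have "h ^ m \<le> min (a / r) (\<kappa> * \<sigma> / q) ^ m" using h by (intro power_mono) auto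
    also have "\<dots> \<le> sqrt ((a / r) ^ m * (\<kappa> * \<sigma> / q) ^ m)"
      using a \<sigma> \<kappa>0 by (intro min_power_le_sqrt) auto
    also have "\<kappa> ^ m = (real r / real q) powr w"
      using \<kappa> \<kappa>0 m by (simp add: powr_realpow[symmetric] powr_powr)
    then have "(a / r) ^ m * (\<kappa> * \<sigma> / q) ^ m
        = (a ^ m * \<sigma> ^ m) * ((real r / real q) powr w / (real r * real q) ^ m)"
      by (simp add: power_mult_distrib power_divide)
    also have "sqrt \<dots> = sqrt ((real r / real q) powr w / (real r * real q) ^ m) * sqrt (a ^ m * \<sigma> ^ m)"
      by (simp only: real_sqrt_mult mult.commute)
    finally have "f * d ^ m * h ^ m
        \<le> f * d ^ m * (sqrt ((real r / real q) powr w / (real r * real q) ^ m) * sqrt (a ^ m * \<sigma> ^ m))"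
      using f d by (intro mult_left_mono) auto
    also have "\<dots> = (f * d ^ m * sqrt ((real r / real q) powr w / (real r * real q) ^ m)) * sqrt (a ^ m * \<sigma> ^ m)"
      by (simp only: mult.assoc)
    also have "\<dots> \<le> gcd_kernel r q * sqrt (a ^ m * \<sigma> ^ m)"
      using gcd_weight_le_gcd_kernel[OF r q mw] a \<sigma> unfolding f_def d_def by (intro mult_right_mono) auto
    moreover have "0 \<le> a ^ m * \<sigma> ^ m" using a \<sigma> by simp
    ultimately show ?thesis using False by (simp add: power_mult_distrib mult.assoc)
  qed
  then show ?thesis unfolding f_def h_def .
qed

lemma power_add_le:
  fixes x y :: real
  assumes "0 \<le> x" "0 \<le> y"
  shows "(x + y) ^ m \<le> 2 ^ m * (x ^ m + y ^ m)"
proof -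
  have "(x + y) ^ m \<le> (2 * max x y) ^ m" using assms by (intro power_mono) auto
  also have "\<dots> \<le> 2 ^ m * (x ^ m + y ^ m)"
    using assms by (cases "x \<le> y") (auto simp: max_def power_mult_distrib)
  finally show ?thesis .
qed

lemma weighted_measure_A1m_inter_le:
  fixes c1 c2 :: "real^'n" and r q :: nat and \<rho> \<sigma> w :: real
  assumes r: "r \<ge> 1" and q: "q \<ge> 1" and \<rho>: "\<rho> > 0" and \<sigma>: "\<sigma> > 0" and w: "w \<ge> 0"
    and mw: "real CARD('n) + w \<ge> 3" and \<kappa>1: "(real r / real q) powr (w / real CARD('n)) \<le> 1"
  shows "(real (gcd r q) / r) powr w * measure lebesgue (A1m r (torus_ball c1 \<rho>) \<inter>
      A1m q (torus_ball c2 ((real r / real q) powr (w / real CARD('n)) * \<sigma>)))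
    \<le> 2 * 64 ^ CARD('n) * ((min \<rho> 1) ^ CARD('n) * (min \<sigma> 1) ^ CARD('n)
      + gcd_kernel r q * sqrt ((min \<rho> 1) ^ CARD('n) * (min \<sigma> 1) ^ CARD('n)))"
proof -
  define m where "m = CARD('n)"
  define \<kappa> where "\<kappa> = (real r / real q) powr (w / real m)"
  define a where "a = min \<rho> 1"
  define b where "b = min (\<kappa> * \<sigma>) 1"
  define d where "d = real (gcd r q)"
  define h where "h = min (a / r) (b / q)"
  define f where "f = (d / r) powr w"
  define x where "x = a ^ m * (min \<sigma> 1) ^ m"
  define k where "k = gcd_kernel r q * sqrt x"
  have \<kappa>0: "\<kappa> > 0" unfolding \<kappa>_def using r q by simp
  have "\<kappa> * \<sigma> \<le> \<sigma>" using \<kappa>0 \<kappa>1 \<sigma> unfolding \<kappa>_def m_def by (intro mult_left_le_one_le) auto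
  then have "b \<le> min \<sigma> 1" unfolding b_def by (rule min.mono) simp
  moreover have a: "0 < a" "a \<le> 1" and "0 < b" and d: "0 < d" "d \<le> real r"
    using \<rho> \<sigma> \<kappa>0 r unfolding a_def b_def d_def by (auto simp: gcd_le1_nat)
  ultimately have b: "0 < b" "b \<le> min \<sigma> 1" by simp_all
  have h: "0 \<le> h" unfolding h_def using a b by simp
  have f: "0 \<le> f" "f \<le> 1" unfolding f_def using d w by (auto intro!: powr_le1)
  have "f * measure lebesgue (A1m r (torus_ball c1 \<rho>) \<inter> A1m q (torus_ball c2 (\<kappa> * \<sigma>)))
      \<le> f * (32 * a * b + 8 * d * h) ^ m"
    using measure_A1m_inter_le[OF r q \<rho>, of "\<kappa> * \<sigma>" c1 c2] \<kappa>0 \<sigma> f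
    unfolding a_def b_def d_def h_def m_def by (simp add: mult_left_mono)
  also have "\<dots> \<le> f * (2 ^ m * ((32 * a * b) ^ m + (8 * d * h) ^ m))"
    using a b d h f by (intro mult_left_mono power_add_le) auto
  also have "\<dots> = 64 ^ m * (f * (a * b) ^ m) + 16 ^ m * (f * (d * h) ^ m)"
    by (simp add: algebra_simps power_mult_distrib flip: power_mult_distrib)
  also have "\<dots> \<le> 64 ^ m * x + 16 ^ m * (x + k)"
  proof (intro add_mono mult_left_mono)
    have "f * (a * b) ^ m \<le> (a * b) ^ m" using f a b by (intro mult_left_le_one_le) auto
    also have "\<dots> \<le> x" unfolding x_def power_mult_distrib[symmetric] using a b by (intro power_mono) auto
    finally show "f * (a * b) ^ m \<le> x" .
    show "f * (d * h) ^ m \<le> x + k"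
      using weighted_gcd_term_le[OF r q a \<sigma> w, of m \<kappa>] mw \<kappa>1
      unfolding f_def d_def h_def b_def x_def k_def \<kappa>_def m_def by simp
  qed auto
  also have "\<dots> \<le> 2 * 64 ^ m * (x + k)"
  proof -
    have "0 \<le> x" "0 \<le> k" unfolding x_def k_def using a \<sigma> gcd_kernel_nonneg[of r q] by simp_all
    moreover have "(16::real) ^ m \<le> 64 ^ m" by (intro power_mono) auto
    ultimately have "16 ^ m * (x + k) \<le> 64 ^ m * (x + k)" "0 \<le> 64 ^ m * k"
      by (simp_all add: mult_right_mono)
    then show ?thesis by (simp add: algebra_simps)
  qed
  finally show ?thesis unfolding f_def d_def \<kappa>_def x_def k_def a_def m_def .
qed

definition zeta_3_2 :: real where
  "zeta_3_2 = (\<Sum>n. real n powr (-3/2))"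

lemma summable_powr_3_2: "summable (\<lambda>n::nat. real n powr (-3/2))"
  by (simp add: summable_real_powr_iff)

lemma sum_powr_3_2_le_zeta_3_2: "finite A \<Longrightarrow> (\<Sum>n\<in>A. real n powr (-3/2)) \<le> zeta_3_2"
  unfolding zeta_3_2_def by (rule sum_le_suminf[OF summable_powr_3_2]) auto

lemma zeta_3_2_nonneg: "zeta_3_2 \<ge> 0"
  unfolding zeta_3_2_def by (rule suminf_nonneg[OF summable_powr_3_2]) simp

lemma sum_multiples_powr_le:
  fixes d r :: nat
  assumes "d \<ge> 1"
  shows "(\<Sum>q | q \<in> {1..Q} \<and> d dvd q. (real d ^ 2 / (real r * real q)) powr (3/2))
    \<le> (real d / real r) powr (3/2) * zeta_3_2"
proof -
  have "{q. q \<in> {1..Q} \<and> d dvd q} \<subseteq> (\<lambda>j. d * j) ` {1..Q}"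
  proof clarify
    fix q assume "q \<in> {1..Q}" "d dvd q"
    then obtain j where "q = d * j" "1 \<le> d * j" "d * j \<le> Q" by (auto elim: dvdE)
    moreover from this have "1 \<le> j" by (cases j) auto
    moreover have "j \<le> Q" using \<open>d * j \<le> Q\<close> assms by (metis le_trans mult_le_mono1 mult_1)
    ultimately show "q \<in> (\<lambda>j. d * j) ` {1..Q}" by auto
  qed
  then have "(\<Sum>q | q \<in> {1..Q} \<and> d dvd q. (real d ^ 2 / (real r * real q)) powr (3/2))
      \<le> (\<Sum>q\<in>(\<lambda>j. d * j) ` {1..Q}. (real d ^ 2 / (real r * real q)) powr (3/2))"
    by (intro sum_mono2) auto
  also have "\<dots> = (\<Sum>j\<in>{1..Q}. (real d ^ 2 / (real r * real (d * j))) powr (3/2))"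
    using assms by (intro sum.reindex_cong[of "\<lambda>j. d * j"]) (auto simp: inj_on_def)
  also have "\<dots> = (\<Sum>j\<in>{1..Q}. (real d / real r) powr (3/2) * real j powr (-3/2))"
  proof (rule sum.cong)
    fix j assume "j \<in> {1..Q}"
    then have "real d ^ 2 / (real r * real (d * j)) = (real d / real r) * (1 / real j)"
      using assms by (simp add: power2_eq_square field_simps)
    then show "(real d ^ 2 / (real r * real (d * j))) powr (3/2) = (real d / real r) powr (3/2) * real j powr (-3/2)"
      using \<open>j \<in> {1..Q}\<close> by (simp add: powr_mult powr_divide powr_minus_divide)
  qed simp
  also have "\<dots> = (real d / real r) powr (3/2) * (\<Sum>j\<in>{1..Q}. real j powr (-3/2))"
    by (simp add: sum_distrib_left)
  also have "\<dots> \<le> (real d / real r) powr (3/2) * zeta_3_2"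
    by (intro mult_left_mono sum_powr_3_2_le_zeta_3_2) auto
  finally show ?thesis .
qed

lemma sum_divisors_powr_le:
  fixes r :: nat
  assumes "r \<ge> 1"
  shows "(\<Sum>d | d \<in> {1..r} \<and> d dvd r. (real d / real r) powr (3/2)) \<le> zeta_3_2"
proof -
  define D where "D = {d. d \<in> {1..r} \<and> d dvd r}"
  have "(real d / real r) powr (3/2) = real (r div d) powr (-3/2)" if "d \<in> D" for d
  proof -
    from that have d: "d dvd r" "d \<ge> 1" unfolding D_def by auto
    then have "real r = real d * real (r div d)" by (simp flip: of_nat_mult)
    then have "real d / real r = 1 / real (r div d)" using d by (simp add: field_simps)
    then show ?thesis by (simp add: powr_divide powr_minus_divide)
  qed
  then have "(\<Sum>d\<in>D. (real d / real r) powr (3/2)) = (\<Sum>d\<in>D. real (r div d) powr (-3/2))"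
    by (rule sum.cong[OF refl])
  also have "\<dots> = (\<Sum>e\<in>(\<lambda>d. r div d) ` D. real e powr (-3/2))"
  proof (rule sum.reindex_cong[symmetric, OF _ refl refl])
    show "inj_on (\<lambda>d. r div d) D"
    proof (rule inj_onI)
      fix x y assume "x \<in> D" "y \<in> D" and eq: "r div x = r div y"
      from \<open>x \<in> D\<close> \<open>y \<in> D\<close> have "x * (r div x) = r" "y * (r div y) = r" unfolding D_def by simp_all
      moreover have "r div x \<noteq> 0" using \<open>x * (r div x) = r\<close> assms by (metis mult_0_right not_one_le_zero)
      ultimately show "x = y" using eq by (metis mult_cancel_right)
    qed
  qed
  also have "\<dots> \<le> zeta_3_2" unfolding D_def by (intro sum_powr_3_2_le_zeta_3_2) simp
  finally show ?thesis unfolding D_def .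
qed

text \<open>Group \<open>q\<close> by \<open>d = gcd r q\<close>: the multiples of \<open>d\<close> contribute \<open>(d/r)\<^sup>3\<^sup>/\<^sup>2 \<zeta>(3/2)\<close>,
  and the divisors \<open>d\<close> of \<open>r\<close> contribute another \<open>\<zeta>(3/2)\<close>.\<close>
lemma gcd_kernel_row_sum_le:
  assumes "r \<ge> 1"
  shows "(\<Sum>q\<in>{1..Q}. gcd_kernel r q) \<le> zeta_3_2 ^ 2"
proof -
  define D where "D = {d. d \<in> {1..r} \<and> d dvd r}"
  define g where "g = (\<lambda>d q::nat. (real d ^ 2 / (real r * real q)) powr (3/2))"
  have "gcd_kernel r q \<le> (\<Sum>d | d \<in> D \<and> d dvd q. g d q)" if "q \<in> {1..Q}" for q
  proof -
    have "gcd r q \<in> {d. d \<in> D \<and> d dvd q}" unfolding D_def using assms that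
      by (auto simp: gcd_le1_nat Suc_le_eq)
    then show ?thesis
      unfolding gcd_kernel_def g_def by (intro member_le_sum) (auto simp: D_def)
  qed
  then have "(\<Sum>q\<in>{1..Q}. gcd_kernel r q) \<le> (\<Sum>q\<in>{1..Q}. \<Sum>d | d \<in> D \<and> d dvd q. g d q)"
    by (rule sum_mono)
  also have "\<dots> = (\<Sum>d\<in>D. \<Sum>q | q \<in> {1..Q} \<and> d dvd q. g d q)"
    by (rule sum.swap_restrict) (simp_all add: D_def)
  also have "\<dots> \<le> (\<Sum>d\<in>D. (real d / real r) powr (3/2) * zeta_3_2)"
    unfolding g_def D_def by (intro sum_mono sum_multiples_powr_le) auto
  also have "\<dots> = (\<Sum>d\<in>D. (real d / real r) powr (3/2)) * zeta_3_2"
    by (simp add: sum_distrib_right)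
  also have "\<dots> \<le> zeta_3_2 * zeta_3_2"
    using sum_divisors_powr_le[OF assms] zeta_3_2_nonneg unfolding D_def by (intro mult_right_mono) auto
  finally show ?thesis by (simp add: power2_eq_square)
qed

lemma gcd_kernel_sum_le:
  fixes V :: "nat \<Rightarrow> real"
  assumes V: "\<And>q. V q \<ge> 0"
  shows "(\<Sum>q=1..Q. \<Sum>r=1..Q. gcd_kernel r q * sqrt (V r * V q)) \<le> zeta_3_2 ^ 2 * (\<Sum>q=1..Q. V q)"
proof -
  have "(\<Sum>q=1..Q. \<Sum>r=1..Q. gcd_kernel r q * sqrt (V r * V q))
     \<le> (\<Sum>q=1..Q. \<Sum>r=1..Q. gcd_kernel r q * ((V r + V q) / 2))"
    using V gcd_kernel_nonneg by (intro sum_mono mult_left_mono arith_geo_mean_sqrt) auto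
  also have "\<dots> = ((\<Sum>q=1..Q. \<Sum>r=1..Q. gcd_kernel r q * V r) + (\<Sum>q=1..Q. \<Sum>r=1..Q. gcd_kernel r q * V q)) / 2"
    by (simp add: sum.distrib sum_divide_distrib distrib_left add_divide_distrib)
  also have "(\<Sum>q=1..Q. \<Sum>r=1..Q. gcd_kernel r q * V r) = (\<Sum>r=1..Q. V r * (\<Sum>q=1..Q. gcd_kernel r q))"
    by (subst sum.swap) (simp add: sum_distrib_left mult.commute)
  also have "(\<Sum>q=1..Q. \<Sum>r=1..Q. gcd_kernel r q * V q) = (\<Sum>q=1..Q. V q * (\<Sum>r=1..Q. gcd_kernel q r))"
    by (simp add: sum_distrib_left mult.commute gcd_kernel_commute)
  also have "\<dots> \<le> ((\<Sum>r=1..Q. V r * zeta_3_2 ^ 2) + (\<Sum>q=1..Q. V q * zeta_3_2 ^ 2)) / 2"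
  proof -
    have "(\<Sum>r=1..Q. V r * (\<Sum>q=1..Q. gcd_kernel r q)) \<le> (\<Sum>r=1..Q. V r * zeta_3_2 ^ 2)"
      using V gcd_kernel_row_sum_le by (intro sum_mono mult_left_mono) auto
    then show ?thesis by simp
  qed
  finally show ?thesis by (simp add: sum_distrib_right[symmetric] mult.commute)
qed

section \<open>Pair sums and quasi-independence\<close>

lemma sum_square_le_gcd_kernel:
  fixes f :: "nat \<Rightarrow> nat \<Rightarrow> real" and V :: "nat \<Rightarrow> real"
  assumes V: "\<And>q. V q \<ge> 0" and K: "K \<ge> 0"
    and f: "\<And>r q. 1 \<le> r \<Longrightarrow> 1 \<le> q \<Longrightarrow> f r q \<le> K * (V r * V q + gcd_kernel r q * sqrt (V r * V q))"
  shows "(\<Sum>q=1..Q. \<Sum>r=1..Q. f r q) \<le> K * ((\<Sum>q=1..Q. V q) ^ 2 + zeta_3_2 ^ 2 * (\<Sum>q=1..Q. V q))"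
proof -
  have "(\<Sum>q=1..Q. \<Sum>r=1..Q. f r q) \<le> (\<Sum>q=1..Q. \<Sum>r=1..Q. K * (V r * V q + gcd_kernel r q * sqrt (V r * V q)))"
    using f by (intro sum_mono) auto
  also have "\<dots> = K * ((\<Sum>q=1..Q. \<Sum>r=1..Q. V r * V q) + (\<Sum>q=1..Q. \<Sum>r=1..Q. gcd_kernel r q * sqrt (V r * V q)))"
    by (simp add: sum_distrib_left sum.distrib distrib_left)
  also have "(\<Sum>q=1..Q. \<Sum>r=1..Q. V r * V q) = (\<Sum>q=1..Q. V q) ^ 2"
    by (simp add: power2_eq_square sum_product mult.commute)
  also have "K * ((\<Sum>q=1..Q. V q) ^ 2 + (\<Sum>q=1..Q. \<Sum>r=1..Q. gcd_kernel r q * sqrt (V r * V q)))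
      \<le> K * ((\<Sum>q=1..Q. V q) ^ 2 + zeta_3_2 ^ 2 * (\<Sum>q=1..Q. V q))"
    using gcd_kernel_sum_le[OF V, where Q=Q] K by (intro mult_left_mono add_left_mono)
  finally show ?thesis .
qed

lemma sum_triangle_le_gcd_kernel:
  fixes f :: "nat \<Rightarrow> nat \<Rightarrow> real" and V :: "nat \<Rightarrow> real"
  assumes V: "\<And>q. V q \<ge> 0" and K: "K \<ge> 0"
    and f: "\<And>r q. 1 \<le> r \<Longrightarrow> r \<le> q \<Longrightarrow> f r q \<le> K * (V r * V q + gcd_kernel r q * sqrt (V r * V q))"
  shows "(\<Sum>q=1..Q. \<Sum>r=1..q. f r q) \<le> K * ((\<Sum>q=1..Q. V q) ^ 2 + zeta_3_2 ^ 2 * (\<Sum>q=1..Q. V q))"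
proof -
  define g where "g r q = K * (V r * V q + gcd_kernel r q * sqrt (V r * V q))" for r q
  have "(\<Sum>q=1..Q. \<Sum>r=1..q. f r q) \<le> (\<Sum>q=1..Q. \<Sum>r=1..q. g r q)"
    unfolding g_def using f by (intro sum_mono) auto
  also have "\<dots> \<le> (\<Sum>q=1..Q. \<Sum>r=1..Q. g r q)"
    unfolding g_def using V K gcd_kernel_nonneg by (intro sum_mono sum_mono2) auto
  also have "\<dots> \<le> K * ((\<Sum>q=1..Q. V q) ^ 2 + zeta_3_2 ^ 2 * (\<Sum>q=1..Q. V q))"
    by (rule sum_square_le_gcd_kernel[OF V K]) (simp add: g_def)
  finally show ?thesis .
qed

lemma weighted_pair_sum_le:
  fixes c :: "nat \<Rightarrow> real^'n" and rho :: "nat \<Rightarrow> real" and w :: real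
  assumes pos: "\<And>q. rho q > 0" and w: "w \<ge> 0" and mw: "real CARD('n) + w \<ge> 3"
  shows "(\<Sum>q=1..Q. \<Sum>r=1..q. (real (gcd r q) / real r) powr w *
      measure lebesgue (A1m r (torus_ball (c r) (rho r)) \<inter>
        A1m q (torus_ball (c q) ((real r / real q) powr (w / real CARD('n)) * rho q))))
    \<le> 2 * 64 ^ CARD('n) * ((\<Sum>q=1..Q. (min (rho q) 1) ^ CARD('n)) ^ 2
      + zeta_3_2 ^ 2 * (\<Sum>q=1..Q. (min (rho q) 1) ^ CARD('n)))"
proof (rule sum_triangle_le_gcd_kernel)
  fix r q :: nat assume "1 \<le> r" "r \<le> q"
  moreover from this have "(real r / real q) powr (w / real CARD('n)) \<le> 1"
    using w by (intro powr_le1) auto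
  ultimately show "(real (gcd r q) / real r) powr w *
      measure lebesgue (A1m r (torus_ball (c r) (rho r)) \<inter>
        A1m q (torus_ball (c q) ((real r / real q) powr (w / real CARD('n)) * rho q)))
    \<le> 2 * 64 ^ CARD('n) * ((min (rho r) 1) ^ CARD('n) * (min (rho q) 1) ^ CARD('n)
      + gcd_kernel r q * sqrt ((min (rho r) 1) ^ CARD('n) * (min (rho q) 1) ^ CARD('n)))"
    using pos w mw by (intro weighted_measure_A1m_inter_le) auto
qed (use pos in \<open>simp_all add: less_imp_le\<close>)

lemma pair_sum_le:
  fixes c :: "nat \<Rightarrow> real^'n" and rho :: "nat \<Rightarrow> real"
  assumes pos: "\<And>q. rho q > 0" and m: "CARD('n) \<ge> 3"
  shows "(\<Sum>q=1..Q. \<Sum>r=1..Q. measure lebesgue (A1m q (torus_ball (c q) (rho q)) \<inter> A1m r (torus_ball (c r) (rho r))))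
    \<le> 2 * 64 ^ CARD('n) * ((\<Sum>q=1..Q. (min (rho q) 1) ^ CARD('n)) ^ 2
      + zeta_3_2 ^ 2 * (\<Sum>q=1..Q. (min (rho q) 1) ^ CARD('n)))"
proof (rule sum_square_le_gcd_kernel)
  fix r q :: nat assume "1 \<le> r" "1 \<le> q"
  then have "(real (gcd q r) / real q) powr 0 * measure lebesgue (A1m q (torus_ball (c q) (rho q)) \<inter>
      A1m r (torus_ball (c r) ((real q / real r) powr (0 / real CARD('n)) * rho r)))
    \<le> 2 * 64 ^ CARD('n) * ((min (rho q) 1) ^ CARD('n) * (min (rho r) 1) ^ CARD('n)
      + gcd_kernel q r * sqrt ((min (rho q) 1) ^ CARD('n) * (min (rho r) 1) ^ CARD('n)))"
    using pos m by (intro weighted_measure_A1m_inter_le) auto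
  then show "measure lebesgue (A1m q (torus_ball (c q) (rho q)) \<inter> A1m r (torus_ball (c r) (rho r)))
    \<le> 2 * 64 ^ CARD('n) * ((min (rho r) 1) ^ CARD('n) * (min (rho q) 1) ^ CARD('n)
      + gcd_kernel r q * sqrt ((min (rho r) 1) ^ CARD('n) * (min (rho q) 1) ^ CARD('n)))"
    using \<open>1 \<le> r\<close> \<open>1 \<le> q\<close> by (simp add: gcd_kernel_commute mult.commute)
qed (use pos in \<open>simp_all add: less_imp_le\<close>)

lemma eventually_ge_partial_sums:
  fixes f :: "nat \<Rightarrow> real"
  assumes nonneg: "\<And>q. f q \<ge> 0" and "\<not> summable f"
  shows "\<forall>\<^sub>F Q in sequentially. B \<le> (\<Sum>q=1..Q. f q)"
proof -
  have "\<not> (\<forall>n. (\<Sum>k\<le>n. f k) \<le> B + f 0)"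
    using bounded_imp_summable[of f "B + f 0"] assms by blast
  then obtain n where n: "B + f 0 < (\<Sum>k\<le>n. f k)" by (auto simp: not_le)
  have "(\<Sum>k\<le>n. f k) = f 0 + (\<Sum>k=1..n. f k)"
    by (simp add: atMost_atLeast0 sum.atLeast_Suc_atMost)
  moreover have "(\<Sum>k=1..n. f k) \<le> (\<Sum>k=1..Q. f k)" if "Q \<ge> n" for Q
    using that nonneg by (intro sum_mono2) auto
  ultimately have "B \<le> (\<Sum>k=1..Q. f k)" if "Q \<ge> n" for Q using n that by fastforce
  then show ?thesis unfolding eventually_sequentially by blast
qed

lemma eventually_ge_capped_vol_sums:
  fixes c :: "nat \<Rightarrow> real^'n" and rho :: "nat \<Rightarrow> real"
  assumes pos: "\<And>q. rho q > 0" and div: "\<not> summable (\<lambda>q. torus_vol (torus_ball (c q) (rho q)))"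
  shows "\<forall>\<^sub>F Q in sequentially. B \<le> (\<Sum>q=1..Q. (min (rho q) 1) ^ CARD('n))"
proof (rule eventually_ge_partial_sums)
  show "\<not> summable (\<lambda>q. (min (rho q) 1) ^ CARD('n))"
  proof
    assume "summable (\<lambda>q. (min (rho q) 1) ^ CARD('n))"
    then have "summable (\<lambda>q. 40 ^ CARD('n) * (min (rho q) 1) ^ CARD('n))" by (rule summable_mult)
    moreover have "norm (torus_vol (torus_ball (c q) (rho q))) \<le> 40 ^ CARD('n) * (min (rho q) 1) ^ CARD('n)" for q
      using torus_vol_le[OF pos[of q], of "c q"] by (simp add: torus_vol_def)
    ultimately have "summable (\<lambda>q. torus_vol (torus_ball (c q) (rho q)))"
      by (rule summable_comparison_test'[where N=0])
    with div show False ..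
  qed
qed (use pos in \<open>simp_all add: less_imp_le\<close>)

lemma le_const_mul_square:
  fixes X V S K Z \<alpha> :: real
  assumes X: "X \<le> K * (V ^ 2 + Z * V)" and S: "\<alpha> * V \<le> S" "1 \<le> S"
    and pos: "0 < \<alpha>" "0 \<le> K" "0 \<le> Z" "0 \<le> V"
  shows "X \<le> K * (1 / \<alpha> ^ 2 + Z / \<alpha>) * S ^ 2"
proof -
  have V: "V \<le> S / \<alpha>" using S pos by (simp add: field_simps)
  then have "V ^ 2 \<le> S ^ 2 / \<alpha> ^ 2" using pos by (simp add: power_mono flip: power_divide)
  moreover have "S / \<alpha> \<le> S ^ 2 / \<alpha>" using S pos by (simp add: divide_right_mono power2_eq_square)
  then have "Z * V \<le> Z * (S ^ 2 / \<alpha>)" using V pos by (intro mult_left_mono) auto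
  moreover have "(1 / \<alpha> ^ 2 + Z / \<alpha>) * S ^ 2 = S ^ 2 / \<alpha> ^ 2 + Z * (S ^ 2 / \<alpha>)"
    using pos by (simp add: field_simps)
  ultimately have "V ^ 2 + Z * V \<le> (1 / \<alpha> ^ 2 + Z / \<alpha>) * S ^ 2" by linarith
  then have "K * (V ^ 2 + Z * V) \<le> K * ((1 / \<alpha> ^ 2 + Z / \<alpha>) * S ^ 2)" using pos(2) by (rule mult_left_mono)
  then show ?thesis using X by (simp add: mult.assoc)
qed

lemma limsup_square_ratio_pos:
  fixes N D V :: "nat \<Rightarrow> real"
  assumes V: "\<forall>\<^sub>F Q in sequentially. 1 \<le> V Q" and N: "\<And>Q. \<alpha> * V Q \<le> N Q"
    and D: "\<And>Q. D Q \<le> K * (V Q ^ 2 + Z * V Q)" "\<forall>\<^sub>F Q in sequentially. 0 < D Q"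
    and pos: "0 < \<alpha>" "0 < K" "0 \<le> Z"
  shows "0 < limsup (\<lambda>Q. ereal (N Q ^ 2 / D Q))"
proof -
  define c where "c = \<alpha> ^ 2 / (K * (1 + Z))"
  have "\<forall>\<^sub>F Q in sequentially. ereal c \<le> ereal (N Q ^ 2 / D Q)"
    using V D(2)
  proof eventually_elim
    case (elim Q)
    have "V Q \<le> V Q ^ 2" using elim by (simp add: power2_eq_square)
    then have "Z * V Q \<le> Z * V Q ^ 2" using pos by (intro mult_left_mono) auto
    then have "K * (V Q ^ 2 + Z * V Q) \<le> K * ((1 + Z) * V Q ^ 2)"
      using pos by (intro mult_left_mono) (auto simp: algebra_simps)
    then have "D Q \<le> K * (1 + Z) * V Q ^ 2" using D(1)[of Q] by (simp add: mult.assoc)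
    moreover have "(\<alpha> * V Q) ^ 2 \<le> N Q ^ 2"
      using N[of Q] elim pos by (intro power_mono) auto
    moreover have "0 < K * (1 + Z) * V Q ^ 2" using elim pos by simp
    ultimately have "(\<alpha> * V Q) ^ 2 / (K * (1 + Z) * V Q ^ 2) \<le> N Q ^ 2 / D Q"
      using elim by (meson divide_mono zero_le_power2 order.trans)
    moreover have "(\<alpha> * V Q) ^ 2 / (K * (1 + Z) * V Q ^ 2) = c"
      using elim unfolding c_def by (simp add: power_mult_distrib)
    ultimately show ?case by simp
  qed
  then have "ereal c \<le> limsup (\<lambda>Q. ereal (N Q ^ 2 / D Q))"
    by (intro le_Limsup) auto
  moreover have "0 < c" unfolding c_def using pos by simp
  ultimately show ?thesis by (meson ereal_less(2) order.strict_trans2)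
qed

lemma measure_A1m_pos:
  fixes c :: "real^'n"
  assumes "r \<ge> 1" "\<rho> > 0"
  shows "0 < measure lebesgue (A1m r (torus_ball c \<rho>))"
  using measure_A1m_ge[OF assms, of c] assms(2) by (smt (verit) min_less_iff_conj zero_less_divide_iff
      zero_less_power zero_less_one mult_pos_pos)

lemma diagonal_le_sum_square:
  fixes f :: "nat \<Rightarrow> nat \<Rightarrow> real"
  assumes "\<And>q r. 0 \<le> f q r" and "1 \<le> Q"
  shows "f 1 1 \<le> (\<Sum>q=1..Q. \<Sum>r=1..Q. f q r)"
proof -
  have "f 1 1 \<le> (\<Sum>r=1..Q. f 1 r)" using assms by (intro member_le_sum) auto
  also have "\<dots> \<le> (\<Sum>q=1..Q. \<Sum>r=1..Q. f q r)"
    using assms by (intro member_le_sum[of 1 _ "\<lambda>q. \<Sum>r=1..Q. f q r"] sum_nonneg) auto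
  finally show ?thesis .
qed

lemma diagonal_le_sum_triangle:
  fixes f :: "nat \<Rightarrow> nat \<Rightarrow> real"
  assumes "\<And>r q. 0 \<le> f r q" and "1 \<le> Q"
  shows "f 1 1 \<le> (\<Sum>q=1..Q. \<Sum>r=1..q. f r q)"
proof -
  have "f 1 1 = (\<Sum>r=1..1. f r 1)" by simp
  also have "\<dots> \<le> (\<Sum>q=1..Q. \<Sum>r=1..q. f r q)"
    using assms by (intro member_le_sum[of 1 _ "\<lambda>q. \<Sum>r=1..q. f r q"] sum_nonneg) auto
  finally show ?thesis .
qed

lemma capped_vol_sum_le_A1m_sum:
  fixes c :: "nat \<Rightarrow> real^'n" and rho :: "nat \<Rightarrow> real"
  assumes pos: "\<And>q. rho q > 0"
  shows "(1/4) ^ CARD('n) * (\<Sum>q=1..Q. (min (rho q) 1) ^ CARD('n))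
    \<le> (\<Sum>q=1..Q. measure lebesgue (A1m q (torus_ball (c q) (rho q))))"
  unfolding sum_distrib_left by (intro sum_mono measure_A1m_ge pos) simp

lemma weighted_pair_sum_le_const_mul_square:
  fixes c :: "nat \<Rightarrow> real^'n" and rho :: "nat \<Rightarrow> real" and w :: real
  assumes pos: "\<And>q. rho q > 0" and w: "w \<ge> 0" and mw: "real CARD('n) + w \<ge> 3"
  defines "S \<equiv> \<lambda>Q. \<Sum>q=1..Q. measure lebesgue (A1m q (torus_ball (c q) (rho q)))"
  shows "\<exists>C. \<forall>Q. S Q \<ge> 1 \<longrightarrow>
    (\<Sum>q=1..Q. \<Sum>r=1..q. (real (gcd r q) / real r) powr w *
      measure lebesgue (A1m r (torus_ball (c r) (rho r)) \<inter>
        A1m q (torus_ball (c q) ((real r / real q) powr (w / real CARD('n)) * rho q))))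
    \<le> C * (S Q)\<^sup>2"
proof (intro exI allI impI)
  fix Q assume "S Q \<ge> 1"
  then show "(\<Sum>q=1..Q. \<Sum>r=1..q. (real (gcd r q) / real r) powr w *
      measure lebesgue (A1m r (torus_ball (c r) (rho r)) \<inter>
        A1m q (torus_ball (c q) ((real r / real q) powr (w / real CARD('n)) * rho q))))
    \<le> 2 * 64 ^ CARD('n) * (1 / ((1/4) ^ CARD('n)) ^ 2 + zeta_3_2 ^ 2 / (1/4) ^ CARD('n)) * (S Q)\<^sup>2"
    using weighted_pair_sum_le[where rho=rho and c=c and Q=Q, OF pos w mw] capped_vol_sum_le_A1m_sum[where rho=rho and c=c and Q=Q, OF pos] pos
    unfolding S_def by (intro le_const_mul_square) (auto intro!: sum_nonneg simp: less_imp_le)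
qed

lemma QIA_avg_if_divergent:
  fixes c :: "nat \<Rightarrow> real^'n" and rho :: "nat \<Rightarrow> real"
  assumes pos: "\<And>q. rho q > 0" and div: "\<not> summable (\<lambda>q. torus_vol (torus_ball (c q) (rho q)))"
    and m: "CARD('n) \<ge> 3"
  shows "QIA_avg c rho"
  unfolding QIA_avg_def
proof (rule limsup_square_ratio_pos[where \<alpha>="(1/4) ^ CARD('n)" and K="2 * 64 ^ CARD('n)"
      and Z="zeta_3_2 ^ 2"])
  show "\<forall>\<^sub>F Q in sequentially. 1 \<le> (\<Sum>q=1..Q. (min (rho q) 1) ^ CARD('n))"
    by (rule eventually_ge_capped_vol_sums[OF pos div])
  show "\<forall>\<^sub>F Q in sequentially. 0 < (\<Sum>q=1..Q. \<Sum>r=1..Q.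
      measure lebesgue (A1m q (torus_ball (c q) (rho q)) \<inter> A1m r (torus_ball (c r) (rho r))))"
    using eventually_ge_at_top[of 1]
  proof eventually_elim
    case (elim Q)
    have "measure lebesgue (A1m 1 (torus_ball (c 1) (rho 1)) \<inter> A1m 1 (torus_ball (c 1) (rho 1)))
      \<le> (\<Sum>q=1..Q. \<Sum>r=1..Q. measure lebesgue (A1m q (torus_ball (c q) (rho q)) \<inter> A1m r (torus_ball (c r) (rho r))))"
      using elim by (rule diagonal_le_sum_square[rotated]) simp
    then show ?case using measure_A1m_pos[of 1 "rho 1" "c 1"] pos by simp
  qed
qed (use capped_vol_sum_le_A1m_sum[where rho=rho and c=c, OF pos]
    pair_sum_le[where rho=rho and c=c, OF pos m] in auto)

lemma w_QIA_if_divergent: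
  fixes c :: "nat \<Rightarrow> real^'n" and rho :: "nat \<Rightarrow> real" and w :: real
  assumes pos: "\<And>q. rho q > 0" and div: "\<not> summable (\<lambda>q. torus_vol (torus_ball (c q) (rho q)))"
    and w: "w \<ge> 0" and mw: "real CARD('n) + w \<ge> 3"
  shows "w_QIA w c rho"
  unfolding w_QIA_def
proof (rule limsup_square_ratio_pos[where \<alpha>="(1/4) ^ CARD('n)" and K="2 * 64 ^ CARD('n)"
      and Z="zeta_3_2 ^ 2"])
  show "\<forall>\<^sub>F Q in sequentially. 1 \<le> (\<Sum>q=1..Q. (min (rho q) 1) ^ CARD('n))"
    by (rule eventually_ge_capped_vol_sums[OF pos div])
  show "(1/4) ^ CARD('n) * (\<Sum>q=1..Q. (min (rho q) 1) ^ CARD('n))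
    \<le> (\<Sum>q=1..Q. torus_vol (torus_ball (c q) (rho q)))" for Q
    unfolding sum_distrib_left by (intro sum_mono torus_vol_ge pos)
  show "\<forall>\<^sub>F Q in sequentially. 0 < (\<Sum>q=1..Q. \<Sum>r=1..q. (real (gcd r q) / real r) powr w *
      measure lebesgue (A1m r (torus_ball (c r) (rho r)) \<inter>
        A1m q (torus_ball (c q) ((real r / real q) powr (w / real CARD('n)) * rho q))))"
    using eventually_ge_at_top[of 1]
  proof eventually_elim
    case (elim Q)
    have "(real (gcd 1 1) / real 1) powr w * measure lebesgue (A1m 1 (torus_ball (c 1) (rho 1)) \<inter>
        A1m 1 (torus_ball (c 1) ((real 1 / real 1) powr (w / real CARD('n)) * rho 1)))
      \<le> (\<Sum>q=1..Q. \<Sum>r=1..q. (real (gcd r q) / real r) powr w *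
        measure lebesgue (A1m r (torus_ball (c r) (rho r)) \<inter>
          A1m q (torus_ball (c q) ((real r / real q) powr (w / real CARD('n)) * rho q))))"
      using elim by (rule diagonal_le_sum_triangle[rotated]) simp
    then show ?case using measure_A1m_pos[of 1 "rho 1" "c 1"] pos by simp
  qed
qed (use weighted_pair_sum_le[where rho=rho and c=c, OF pos w mw] in auto)

theorem mainTheorem13:
  fixes c :: "nat \<Rightarrow> real^'n" and rho :: "nat \<Rightarrow> real"
  assumes pos: "\<And>q. rho q > 0"
    and div: "\<not> summable (\<lambda>q. torus_vol (torus_ball (c q) (rho q)))"
  defines "S \<equiv> \<lambda>Q. \<Sum>q=1..Q. measure lebesgue (A1m q (torus_ball (c q) (rho q)))"
  shows "(CARD('n) \<ge> 3 \<longrightarrow> QIA_avg c rho)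
    \<and> (CARD('n) \<ge> 2 \<longrightarrow> (\<exists>C. \<forall>Q. S Q \<ge> 1 \<longrightarrow>
          (\<Sum>q=1..Q. \<Sum>r=1..q. (real (gcd q r) / real r) *
             measure lebesgue (A1m r (torus_ball (c r) (rho r)) \<inter>
               A1m q (torus_ball (c q) ((real r / real q) powr (1 / real CARD('n)) * rho q))))
          \<le> C * (S Q)\<^sup>2))
    \<and> (\<exists>C. \<forall>Q. S Q \<ge> 1 \<longrightarrow>
          (\<Sum>q=1..Q. \<Sum>r=1..q. (real (gcd q r) / real r)\<^sup>2 *
             measure lebesgue (A1m r (torus_ball (c r) (rho r)) \<inter>
               A1m q (torus_ball (c q) ((real r / real q) powr (2 / real CARD('n)) * rho q))))
          \<le> C * (S Q)\<^sup>2)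
    \<and> w_QIA (max (3 - real CARD('n)) 0) c rho"
proof -
  have bound: "\<exists>C. \<forall>Q. S Q \<ge> 1 \<longrightarrow>
      (\<Sum>q=1..Q. \<Sum>r=1..q. (real (gcd r q) / real r) powr w *
        measure lebesgue (A1m r (torus_ball (c r) (rho r)) \<inter>
          A1m q (torus_ball (c q) ((real r / real q) powr (w / real CARD('n)) * rho q))))
      \<le> C * (S Q)\<^sup>2" if "w \<ge> 0" "real CARD('n) + w \<ge> 3" for w
    using weighted_pair_sum_le_const_mul_square[OF pos that] unfolding S_def .
  have "CARD('n) \<ge> 2 \<longrightarrow> (\<exists>C. \<forall>Q. S Q \<ge> 1 \<longrightarrow>
          (\<Sum>q=1..Q. \<Sum>r=1..q. (real (gcd q r) / real r) *
             measure lebesgue (A1m r (torus_ball (c r) (rho r)) \<inter>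
               A1m q (torus_ball (c q) ((real r / real q) powr (1 / real CARD('n)) * rho q))))
          \<le> C * (S Q)\<^sup>2)"
    using bound[of 1] by (simp add: gcd.commute)
  moreover have "\<exists>C. \<forall>Q. S Q \<ge> 1 \<longrightarrow>
          (\<Sum>q=1..Q. \<Sum>r=1..q. (real (gcd q r) / real r)\<^sup>2 *
             measure lebesgue (A1m r (torus_ball (c r) (rho r)) \<inter>
               A1m q (torus_ball (c q) ((real r / real q) powr (2 / real CARD('n)) * rho q))))
          \<le> C * (S Q)\<^sup>2"
    using bound[of 2] by (simp add: gcd.commute)
  ultimately show ?thesis
    using QIA_avg_if_divergent[OF pos div] w_QIA_if_divergent[OF pos div, of "max (3 - real CARD('n)) 0"]
    by auto
qed

end
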